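(* Let $m\ge 1$ be an odd integer with prime factorization $m=p_1^{e_1}\cdots p_r^{e_r}$ ($r\ge 1$, $p_1,\dots,p_r$ distinct odd primes, $e_j\ge 1$). Let $\beta=\min\{C(p_j,e_j)\mid 1\le j\le r\}$. Suppose there is exactly one index $j$ with $C(p_j,e_j)=\beta$. Then $N_m(x)\sim N_{p_j^{e_j}}(x)$ as $x\to\infty$. Consequently $$N_m(x)=c\,\frac{x}{(\log x)^{\beta}}\Bigl(1+O\Bigl(\frac{(\log\log x)^5}{\log x}\Bigr)\Bigr)\cdot(1+o(1))$$ for some positive constant $c$; that is, $N_m(x)\sim c\,x/(\log x)^{\beta}$.
   Context: For an odd integer $u$, $l(u)$ denotes the multiplicative order of $2$ modulo $u$ (the least $l\ge 1$ with $2^l\equiv 1 \pmod u$). $N_m(x)$ denotes the number of odd integers $u\le x$ with $m\nmid l(u)$. For a prime $q$ and integer $n\ge 1$, $C(q,n):=q^{2-n}/(q^2-1)$. It is known (a result of H. Müller) that for every odd prime $q$ and every fixed $n\ge 1$, $N_{q^n}(x)=c_{q^n}\frac{x}{(\log x)^{C(q,n)}}\bigl(1+O((\log\log x)^5/\log x)\bigr)$ with $c_{q^n}>0$ a constant. *)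

theory Defs
  imports "HOL-Analysis.Analysis" "HOL-Number_Theory.Number_Theory" "HOL-Library.Landau_Symbols"
begin

definition ell :: "nat \<Rightarrow> nat" where
  "ell u = ord u 2"

definition NN :: "nat \<Rightarrow> real \<Rightarrow> real" where
  "NN m x = real (card {u::nat. odd u \<and> real u \<le> x \<and> \<not> m dvd ell u})"

definition CC :: "nat \<Rightarrow> nat \<Rightarrow> real" where
  "CC q n = real q powr (2 - real n) / (real q ^ 2 - 1)"

text \<open>Mueller's theorem (a known result, used as hypothesis).\<close>
definition mueller_asymptotic :: bool where
  "mueller_asymptotic \<longleftrightarrow>
     (\<forall>q n. prime q \<and> odd q \<and> n \<ge> 1 \<longrightarrow>
        (\<exists>c>0. (\<lambda>x. NN (q ^ n) x / (c * x / ln x powr CC q n) - 1)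
                 \<in> O[at_top](\<lambda>x. (ln (ln x)) ^ 5 / ln x)))"

end

theory Submission imports Defs "HOL-Real_Asymp.Real_Asymp" begin

(* m divides l(u) iff every exact prime power factor q^f of m does, so
   N_{p^e}(x) <= N_m(x) <= sum over q^f of N_{q^f}(x).
   By Mueller's theorem each summand is of order x / (log x)^C(q,f); the unique minimal exponent
   makes the p-term dominate all others, and the sandwich gives N_m ~ N_{p^e}. *)

lemma dvd_iff_prime_power_factors_dvd:
  fixes m k :: "'a :: factorial_semiring"
  assumes "m \<noteq> 0"
  shows "m dvd k \<longleftrightarrow> (\<forall>p\<in>prime_factors m. p ^ multiplicity p m dvd k)"
proof
  assume "m dvd k"
  then show "\<forall>p\<in>prime_factors m. p ^ multiplicity p m dvd k"
    using multiplicity_dvd dvd_trans by blast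
next
  assume prime_powers_dvd: "\<forall>p\<in>prime_factors m. p ^ multiplicity p m dvd k"
  show "m dvd k"
  proof (cases "k = 0")
    case False
    show ?thesis
    proof (rule multiplicity_le_imp_dvd[OF assms])
      fix p :: 'a assume "prime p"
      show "multiplicity p m \<le> multiplicity p k"
      proof (cases "p \<in> prime_factors m")
        case True
        with prime_powers_dvd have "p ^ multiplicity p m dvd k" by blast
        with \<open>prime p\<close> \<open>k \<noteq> 0\<close> show ?thesis
          by (simp add: power_dvd_iff_le_multiplicity)
      next
        case False
        with \<open>prime p\<close> show ?thesis by (simp add: prime_factors_multiplicity)
      qed
    qed
  qed simp
qed

lemma finite_nat_le_real: "finite {u::nat. real u \<le> x}"
  by (rule finite_subset[of _ "{..nat \<lfloor>x\<rfloor>}"]) (auto simp: le_nat_floor)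

lemma asymp_equiv_sandwich_sum:
  fixes f :: "'i \<Rightarrow> 'a \<Rightarrow> real" and F :: "'a \<Rightarrow> real"
  assumes "finite I" "p \<in> I"
    and dominant: "f p \<sim>[L] g"
    and negligible: "\<And>q. q \<in> I - {p} \<Longrightarrow> f q \<in> o[L](g)"
    and bounds: "\<And>x. f p x \<le> F x" "\<And>x. F x \<le> (\<Sum>q\<in>I. f q x)"
  shows "F \<sim>[L] g"
proof -
  define rest where "rest x = (\<Sum>q\<in>I - {p}. f q x)" for x
  have "rest \<in> o[L](g)"
    unfolding rest_def using negligible by (rule big_sum_in_smallo)
  then have "(\<lambda>x. (f p x - g x) + rest x) \<in> o[L](g)"
    using asymp_equiv_imp_diff_smallo[OF dominant] by (intro sum_in_smallo(1))
  then have upper: "(\<lambda>x. f p x + rest x) \<sim>[L] g"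
    by (intro smallo_imp_asymp_equiv) (simp add: algebra_simps)
  have "F x \<in> {f p x .. f p x + rest x}" for x
    using bounds[of x] sum.remove[OF assms(1,2), of "\<lambda>q. f q x"] by (simp add: rest_def)
  then show ?thesis
    by (intro asymp_equiv_sandwich_real[OF dominant upper] always_eventually) blast
qed

lemma asymp_equiv_if_relative_error_bigo:
  fixes f g :: "real \<Rightarrow> real"
  assumes "(\<lambda>x. f x / g x - 1) \<in> O[at_top](\<lambda>x. ln (ln x) ^ 5 / ln x)"
  shows "f \<sim>[at_top] g"
proof -
  have "(\<lambda>x::real. ln (ln x) ^ 5 / ln x) \<in> o[at_top](\<lambda>_. 1)" by real_asymp
  with assms have "(\<lambda>x. f x / g x - 1) \<in> o[at_top](\<lambda>_. 1)"
    by (rule landau_o.big_small_trans)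
  then have "((\<lambda>x. f x / g x - 1 + 1) \<longlongrightarrow> 0 + 1) at_top"
    by (intro tendsto_add tendsto_const) (use smalloD_tendsto in fastforce)
  then show ?thesis by (intro asymp_equivI') simp
qed

lemma smallo_x_over_ln_powr:
  fixes a b c d :: real
  assumes "a < b" "d > 0"
  shows "(\<lambda>x::real. c * x / ln x powr b) \<in> o[at_top](\<lambda>x. d * x / ln x powr a)"
proof -
  have "(\<lambda>x::real. ln x powr (-b)) \<in> o[at_top](\<lambda>x. ln x powr (-a))"
    using assms by (subst powr_smallo_iff) (auto intro: ln_at_top)
  then have "(\<lambda>x::real. (c * x) * ln x powr (-b)) \<in> o[at_top](\<lambda>x. (d * x) * ln x powr (-a))"
    using assms by (intro landau_o.big_small_mult) simp_all
  then show ?thesis by (simp add: powr_minus divide_inverse)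
qed

lemma NN_mono_dvd:
  assumes "d dvd m"
  shows "NN d x \<le> NN m x"
proof -
  have "card {u. odd u \<and> real u \<le> x \<and> \<not> d dvd ell u} \<le>
        card {u. odd u \<and> real u \<le> x \<and> \<not> m dvd ell u}"
    using assms by (intro card_mono finite_subset[OF _ finite_nat_le_real]) (auto intro: dvd_trans)
  then show ?thesis unfolding NN_def by simp
qed

lemma NN_le_sum_prime_power_factors:
  assumes "m \<noteq> 0"
  shows "NN m x \<le> (\<Sum>p\<in>prime_factors m. NN (p ^ multiplicity p m) x)"
proof -
  have "{u. odd u \<and> real u \<le> x \<and> \<not> m dvd ell u} =
        (\<Union>p\<in>prime_factors m. {u. odd u \<and> real u \<le> x \<and> \<not> p ^ multiplicity p m dvd ell u})"
    using dvd_iff_prime_power_factors_dvd[OF assms] by auto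
  then have "card {u. odd u \<and> real u \<le> x \<and> \<not> m dvd ell u} \<le>
      (\<Sum>p\<in>prime_factors m. card {u. odd u \<and> real u \<le> x \<and> \<not> p ^ multiplicity p m dvd ell u})"
    by (simp add: card_UN_le)
  then show ?thesis unfolding NN_def by (simp flip: of_nat_sum)
qed

lemma NN_prime_power_asymp_equiv:
  assumes "mueller_asymptotic" "prime q" "odd q" "n \<ge> 1"
  shows "\<exists>c>0. NN (q ^ n) \<sim>[at_top] (\<lambda>x. c * x / ln x powr CC q n)"
proof -
  from assms obtain c where "c > 0"
    "(\<lambda>x. NN (q ^ n) x / (c * x / ln x powr CC q n) - 1) \<in> O[at_top](\<lambda>x. ln (ln x) ^ 5 / ln x)"
    unfolding mueller_asymptotic_def by blast
  then show ?thesis by (blast intro: asymp_equiv_if_relative_error_bigo)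
qed

lemma NN_prime_power_factor_asymp_equiv:
  assumes "mueller_asymptotic" "odd m" "q \<in> prime_factors m"
  shows "\<exists>c>0.
    NN (q ^ multiplicity q m) \<sim>[at_top] (\<lambda>x. c * x / ln x powr CC q (multiplicity q m))"
proof -
  have "prime q" "q dvd m" using assms(3) by (auto simp: in_prime_factors_iff)
  moreover have "multiplicity q m \<ge> 1" using assms(3) by (simp add: prime_factors_multiplicity)
  moreover have "odd q" using \<open>q dvd m\<close> \<open>odd m\<close> dvd_trans by blast
  ultimately show ?thesis by (simp add: NN_prime_power_asymp_equiv[OF assms(1)])
qed

lemma NN_asymp_equiv_dominant_prime_power:
  assumes "mueller_asymptotic" "odd m" "m \<noteq> 0" "p \<in> prime_factors m"
    and dominant: "\<And>q. q \<in> prime_factors m - {p} \<Longrightarrow> CC p (multiplicity p m) < CC q (multiplicity q m)"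
  shows "NN m \<sim>[at_top] NN (p ^ multiplicity p m)"
proof -
  have "\<forall>q\<in>prime_factors m. \<exists>c>0.
      NN (q ^ multiplicity q m) \<sim>[at_top] (\<lambda>x. c * x / ln x powr CC q (multiplicity q m))"
    using NN_prime_power_factor_asymp_equiv[OF assms(1,2)] by blast
  from bchoice[OF this] obtain c where c: "\<forall>q\<in>prime_factors m. c q > 0 \<and>
      NN (q ^ multiplicity q m) \<sim>[at_top] (\<lambda>x. c q * x / ln x powr CC q (multiplicity q m))" ..
  then have c_pos: "\<And>q. q \<in> prime_factors m \<Longrightarrow> c q > 0"
    and equiv: "\<And>q. q \<in> prime_factors m \<Longrightarrow>
      NN (q ^ multiplicity q m) \<sim>[at_top] (\<lambda>x. c q * x / ln x powr CC q (multiplicity q m))"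
    by simp_all
  have negligible: "NN (q ^ multiplicity q m) \<in> o[at_top](NN (p ^ multiplicity p m))"
    if q: "q \<in> prime_factors m - {p}" for q
  proof -
    have "NN (q ^ multiplicity q m) \<in> O[at_top](\<lambda>x. c q * x / ln x powr CC q (multiplicity q m))"
      using q by (intro asymp_equiv_imp_bigo equiv) simp
    also have "(\<lambda>x. c q * x / ln x powr CC q (multiplicity q m))
        \<in> o[at_top](\<lambda>x. c p * x / ln x powr CC p (multiplicity p m))"
      using q assms(4) by (intro smallo_x_over_ln_powr dominant c_pos)
    also have "(\<lambda>x. c p * x / ln x powr CC p (multiplicity p m)) \<in> O[at_top](NN (p ^ multiplicity p m))"
      using assms(4) by (intro asymp_equiv_imp_bigo asymp_equiv_symI[OF equiv])
    finally show ?thesis .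
  qed
  show ?thesis
  proof (rule asymp_equiv_sandwich_sum[where f = "\<lambda>q. NN (q ^ multiplicity q m)"])
    show "NN (p ^ multiplicity p m) x \<le> NN m x" for x
      by (rule NN_mono_dvd[OF multiplicity_dvd])
    show "NN m x \<le> (\<Sum>q\<in>prime_factors m. NN (q ^ multiplicity q m) x)" for x
      by (rule NN_le_sum_prime_power_factors[OF \<open>m \<noteq> 0\<close>])
  qed (use assms(4) negligible in auto)
qed

theorem lemma1:
  fixes m :: nat
  assumes mueller: "mueller_asymptotic"
    and odd_m: "odd m" and m_gt: "m > 1"
    and unique: "\<exists>!p. p \<in> prime_factors m \<and>
        CC p (multiplicity p m) = Min ((\<lambda>q. CC q (multiplicity q m)) ` prime_factors m)"
  shows "(\<forall>p \<in> prime_factors m.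
           CC p (multiplicity p m) = Min ((\<lambda>q. CC q (multiplicity q m)) ` prime_factors m) \<longrightarrow>
           (\<lambda>x. NN m x) \<sim>[at_top] (\<lambda>x. NN (p ^ multiplicity p m) x)) \<and>
         (\<exists>c>0. (\<lambda>x. NN m x) \<sim>[at_top]
           (\<lambda>x. c * x / ln x powr Min ((\<lambda>q. CC q (multiplicity q m)) ` prime_factors m)))"
proof -
  define \<beta> where "\<beta> = Min ((\<lambda>q. CC q (multiplicity q m)) ` prime_factors m)"
  obtain p where p: "p \<in> prime_factors m" "CC p (multiplicity p m) = \<beta>"
    and p_unique: "\<And>q. q \<in> prime_factors m \<Longrightarrow> CC q (multiplicity q m) = \<beta> \<Longrightarrow> q = p"
    using unique unfolding \<beta>_def by blast
  have "CC p (multiplicity p m) < CC q (multiplicity q m)" if q: "q \<in> prime_factors m - {p}" for q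
  proof -
    have "\<beta> \<le> CC q (multiplicity q m)" using q unfolding \<beta>_def by (intro Min_le) auto
    moreover have "CC q (multiplicity q m) \<noteq> \<beta>" using q p_unique by blast
    ultimately show ?thesis using p(2) by simp
  qed
  moreover have "m \<noteq> 0" using m_gt by simp
  ultimately have Nm: "NN m \<sim>[at_top] NN (p ^ multiplicity p m)"
    using NN_asymp_equiv_dominant_prime_power[OF mueller odd_m _ p(1)] by blast
  obtain c where "c > 0" and Np: "NN (p ^ multiplicity p m) \<sim>[at_top] (\<lambda>x. c * x / ln x powr \<beta>)"
    using NN_prime_power_factor_asymp_equiv[OF mueller odd_m p(1), unfolded p(2)] by blast
  have "\<forall>q\<in>prime_factors m. CC q (multiplicity q m) = \<beta> \<longrightarrow> NN m \<sim>[at_top] NN (q ^ multiplicity q m)"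
    using Nm by (auto dest: p_unique)
  with \<open>c > 0\<close> asymp_equiv_trans[OF Nm Np] show ?thesis
    unfolding \<beta>_def by blast
qed

end
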